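(* Consider the battery-limited energy harvesting system described in the context, with battery capacity $c\ge 0$, i.i.d. energy arrivals distributed as a nonnegative random variable $X$, and a monotonically increasing concave reward function $r:[0,\infty)\to[0,\infty)$ with continuous first derivative $r'$, and assume $r'(\underline{x})>r'(\overline{x})$. Then the greedy policy is optimal, i.e. $\gamma^*(c)=\mathbb{E}[r(\min\{X,c\})]$, if and only if $c\le c^*$, where $$c^*\triangleq\max\{c\ge 0:\ r'(c)\ge \rho(c)\,\mathbb{E}[r'(X)\mid X<c]\}.$$ In particular, for the reward function $r(x)=\frac12\log(1+x)$, $$c^*=\max\left\{c\ge 0:\ \frac{1}{1+c}\ge \rho(c)\,\mathbb{E}\left[\left.\frac{1}{1+X}\right| X<c\right]\right\}.$$
   Context: Setting: $X_1,X_2,\dots$ are i.i.d. copies of a nonnegative random variable $X$ ($X_t$ is the energy harvested in slot $t$). An online power control policy is a sequence of maps $f_t$ with $G_t=f_t(X_1,\dots,X_t)$. The battery level evolves as $B_t=\min\{B_{t-1}-G_{t-1}+X_t,\,c\}$, $t\ge1$, with $B_0=G_0=0$. A policy is admissible if $G_t\le B_t$ for all $t$. Its throughput is $\liminf_{n\to\infty}\frac1n\mathbb{E}[\sum_{t=1}^n r(G_t)]$, and $\gamma^*(c)$ is the supremum of the throughput over all admissible policies. The greedy policy is $G_t=B_t$ for all $t$; its throughput is $\mathbb{E}[r(\min\{X,c\})]$. Notation: $\rho(x)\triangleq\mathbb{P}(X<x)$, $\underline{x}\triangleq\max\{x\ge0:\rho(x)=0\}$, $\overline{x}\triangleq\inf\{x\ge0:\rho(x)=1\}$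 (possibly $+\infty$), and $r'(\infty)\triangleq\lim_{x\to\infty}r'(x)$. The quantity $\rho(c)\mathbb{E}[r'(X)\mid X<c]$ means $\mathbb{E}[r'(X)\mathbf{1}\{X<c\}]$ (equal to $0$ when $\rho(c)=0$). Logarithms are natural. *)

theory Defs
  imports "HOL-Probability.Probability"
begin

text \<open>D is the distribution of the (nonnegative) energy arrival X, a probability
measure on the nonnegative reals. The i.i.d. arrivals X_1, X_2, ... are the
coordinates omega 1, omega 2, ... of the infinite product measure (omega 0 is unused).\<close>

definition rho :: "real measure \<Rightarrow> real \<Rightarrow> real" where
  "rho D x = measure D {y \<in> space D. y < x}"

definition xlow :: "real measure \<Rightarrow> real" where
  "xlow D = (GREATEST x. 0 \<le> x \<and> rho D x = 0)"

definition xhigh :: "real measure \<Rightarrow> ereal" where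
  "xhigh D = Inf (ereal ` {x. 0 \<le> x \<and> rho D x = 1})"

definition deriv_at_xhigh :: "(real \<Rightarrow> real) \<Rightarrow> real measure \<Rightarrow> real" where
  "deriv_at_xhigh r' D =
     (if xhigh D = \<infinity> then Lim at_top r' else r' (real_of_ereal (xhigh D)))"

definition arrivals :: "real measure \<Rightarrow> (nat \<Rightarrow> real) measure" where
  "arrivals D = (\<Pi>\<^sub>M i\<in>(UNIV::nat set). D)"

definition power :: "(nat \<Rightarrow> (nat \<Rightarrow> real) \<Rightarrow> real) \<Rightarrow> nat \<Rightarrow> (nat \<Rightarrow> real) \<Rightarrow> real" where
  "power f t \<omega> = (if t = 0 then 0 else f t \<omega>)"

fun battery :: "(nat \<Rightarrow> (nat \<Rightarrow> real) \<Rightarrow> real) \<Rightarrow> real \<Rightarrow> (nat \<Rightarrow> real) \<Rightarrow> nat \<Rightarrow> real" where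
  "battery f c \<omega> 0 = 0"
| "battery f c \<omega> (Suc t) = min (battery f c \<omega> t - power f t \<omega> + \<omega> (Suc t)) c"

definition online_policy :: "real measure \<Rightarrow> (nat \<Rightarrow> (nat \<Rightarrow> real) \<Rightarrow> real) \<Rightarrow> bool" where
  "online_policy D f \<longleftrightarrow>
     (\<forall>t. f t \<in> borel_measurable (arrivals D) \<and>
          (\<forall>\<omega>\<in>space (arrivals D). \<forall>\<omega>'\<in>space (arrivals D).
              (\<forall>i\<in>{1..t}. \<omega> i = \<omega>' i) \<longrightarrow> f t \<omega> = f t \<omega>'))"

definition admissible :: "real measure \<Rightarrow> real \<Rightarrow> (nat \<Rightarrow> (nat \<Rightarrow> real) \<Rightarrow> real) \<Rightarrow> bool" where
  "admissible D c f \<longleftrightarrow> online_policy D f \<and>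
     (\<forall>\<omega>\<in>space (arrivals D). \<forall>t. 0 \<le> power f t \<omega> \<and> power f t \<omega> \<le> battery f c \<omega> t)"

definition throughput :: "real measure \<Rightarrow> (real \<Rightarrow> real) \<Rightarrow> (nat \<Rightarrow> (nat \<Rightarrow> real) \<Rightarrow> real) \<Rightarrow> ereal" where
  "throughput D r f =
     liminf (\<lambda>n::nat. ereal ((\<Sum>t=1..n. \<integral>\<omega>. r (power f t \<omega>) \<partial>arrivals D) / real n))"

definition gamma_star :: "real measure \<Rightarrow> (real \<Rightarrow> real) \<Rightarrow> real \<Rightarrow> ereal" where
  "gamma_star D r c = (SUP f \<in> {f. admissible D c f}. throughput D r f)"

definition greedy_optimal :: "real measure \<Rightarrow> (real \<Rightarrow> real) \<Rightarrow> real \<Rightarrow> bool" where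
  "greedy_optimal D r c \<longleftrightarrow> gamma_star D r c = ereal (\<integral>x. r (min x c) \<partial>D)"

text \<open>The set whose maximum is c*: r'(x) >= rho(x) E[r'(X) | X < x] = E[r'(X) 1{X<x}].\<close>
definition cstar_set :: "real measure \<Rightarrow> (real \<Rightarrow> real) \<Rightarrow> real set" where
  "cstar_set D r' = {x. 0 \<le> x \<and> (\<integral>y. r' y * indicator {y. y < x} y \<partial>D) \<le> r' x}"

end

theory Submission
  imports Defs
begin

(* Let s_t = B_t - G_t be the energy carried over from slot t and phi(x) = r'(x) 1{x < c}.
   Concavity of r gives the pathwise bound
     r(G_{t+1}) + r'(c) s_{t+1} <= r(min(X_{t+1}, c)) + s_t phi(X_{t+1}),
   and s_t is independent of X_{t+1}. Hence, if E[phi(X)] <= r'(c), the terms r'(c) s_t telescope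
   and no admissible policy earns more than the greedy reward E[r(min(X, c))] per slot.

   Conversely, if E[phi(X)] > r'(c), choose a in (0, c] with P(X >= a) > 0 and r'(a) < E[phi(X)],
   and then a small d > 0. Keeping d units of an arrival X >= a in an odd slot for the next slot
   loses at most d r'(a - d) in the odd slot and gains at least d E[r'(X + d) 1{X < c - d}] in the
   even one; for small d the gain wins, so greedy is not optimal.

   The capacities with E[phi_c(X)] <= r'(c) form an interval [0, c*]: it is closed because
   x |-> E[r'(X) 1{X < x}] is left-continuous, and bounded because r'(xlow) > r'(xhigh) produces
   some x with E[r'(X) 1{X < x}] > r'(x). *)

section \<open>Concave rewards\<close>

locale concave_reward =
  fixes r r' :: "real \<Rightarrow> real"
  assumes reward_nonneg: "\<forall>x\<ge>0. 0 \<le> r x"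
    and reward_mono: "mono_on {0..} r"
    and reward_concave: "concave_on {0..} r"
    and reward_deriv: "\<forall>x\<ge>0. (r has_real_derivative r' x) (at x within {0..})"
    and deriv_continuous: "continuous_on {0..} r'"
begin

lemma reward_continuous: "continuous_on {0..} r"
  unfolding continuous_on_eq_continuous_within using reward_deriv by (auto intro: DERIV_continuous)

lemma reward_le: "0 \<le> x \<Longrightarrow> x \<le> y \<Longrightarrow> r x \<le> r y"
  using reward_mono by (auto intro: mono_onD)

lemma abs_reward_le: "0 \<le> x \<Longrightarrow> x \<le> y \<Longrightarrow> \<bar>r x\<bar> \<le> r y"
  using reward_nonneg reward_le by auto

lemma convex_neg_reward: "convex_on {0..} (\<lambda>x. - r x)"
  using reward_concave by (simp add: convex_on_iff_concave)

lemma deriv_le_slope: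
  assumes "0 \<le> x" "x \<le> y"
  shows "r' y * (y - x) \<le> r y - r x"
proof (cases "x = y")
  case False
  have "((\<lambda>x. - r x) has_field_derivative - r' y) (at y within {0..})"
    using reward_deriv assms by (auto intro!: derivative_eq_intros)
  then have "- r x - - r y \<ge> - r' y * (x - y)"
    using False assms by (intro convex_on_imp_above_tangent[OF convex_neg_reward]) auto
  then show ?thesis by (simp add: algebra_simps)
qed simp

lemma slope_le_deriv_pos:
  assumes "0 < x" "x \<le> y"
  shows "r y - r x \<le> r' x * (y - x)"
proof -
  have "((\<lambda>x. - r x) has_field_derivative - r' x) (at x within {0..})"
    using reward_deriv assms by (auto intro!: derivative_eq_intros)
  then have "- r y - - r x \<ge> - r' x * (y - x)"
    using assms by (intro convex_on_imp_above_tangent[OF convex_neg_reward]) auto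
  then show ?thesis by (simp add: algebra_simps)
qed

lemma tendsto_reward_within: "0 \<le> x \<Longrightarrow> (r \<longlongrightarrow> r x) (at x within {0..})"
  using reward_continuous by (simp add: continuous_on_def)

lemma tendsto_deriv_within: "0 \<le> x \<Longrightarrow> (r' \<longlongrightarrow> r' x) (at x within {0..})"
  using deriv_continuous by (simp add: continuous_on_def)

text \<open>The base point 0 is not interior to the domain; there the tangent inequality is obtained
  as a limit from the right.\<close>

lemma slope_le_deriv:
  assumes "0 \<le> x" "x \<le> y"
  shows "r y - r x \<le> r' x * (y - x)"
proof (cases "x = 0 \<and> 0 < y")
  case True
  then have "0 < y" by simp
  have "((\<lambda>z. r y - r z) \<longlongrightarrow> r y - r 0) (at_right 0)"
    by (intro tendsto_intros tendsto_within_subset[OF tendsto_reward_within]) auto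
  moreover have "((\<lambda>z. r' z * (y - z)) \<longlongrightarrow> r' 0 * (y - 0)) (at_right 0)"
    by (intro tendsto_intros tendsto_within_subset[OF tendsto_deriv_within]) auto
  moreover have "\<forall>\<^sub>F z in at_right 0. r y - r z \<le> r' z * (y - z)"
    using eventually_at_right_real[OF \<open>0 < y\<close>] by eventually_elim (auto intro!: slope_le_deriv_pos)
  ultimately show ?thesis
    using True by (intro tendsto_le[of "at_right 0"]) auto
next
  case False
  with assms show ?thesis by (cases "x = 0") (auto intro: slope_le_deriv_pos)
qed

lemma deriv_antimono:
  assumes "0 \<le> x" "x \<le> y"
  shows "r' y \<le> r' x"
proof (cases "x = y")
  case False
  have "r' y * (y - x) \<le> r' x * (y - x)"
    using deriv_le_slope[OF assms] slope_le_deriv[OF assms] by linarith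
  with False assms show ?thesis by simp
qed simp

lemma deriv_nonneg: "0 \<le> x \<Longrightarrow> 0 \<le> r' x"
  using slope_le_deriv[of x "x + 1"] reward_le[of x "x + 1"] by simp

lemma abs_deriv_le: "0 \<le> x \<Longrightarrow> \<bar>r' x\<bar> \<le> r' 0"
  using deriv_nonneg deriv_antimono[of 0 x] by simp

lemma isCont_deriv: "0 < x \<Longrightarrow> isCont r' x"
  using deriv_continuous by (rule continuous_on_interior) simp

lemma tendsto_deriv_at_top: "(r' \<longlongrightarrow> (INF x\<in>{0..}. r' x)) at_top"
proof (rule order_tendstoI)
  have bdd: "bdd_below (r' ` {0..})"
    by (rule bdd_belowI[of _ 0]) (auto intro: deriv_nonneg)
  fix v assume v: "v < (INF x\<in>{0..}. r' x)"
  show "\<forall>\<^sub>F x in at_top. v < r' x"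
    using eventually_ge_at_top[of 0]
  proof eventually_elim
    case (elim x)
    then show ?case using v cINF_lower[OF bdd, of x] by simp
  qed
next
  fix v assume "(INF x\<in>{0..}. r' x) < v"
  then obtain x0 where x0: "0 \<le> x0" "r' x0 < v"
    by (subst (asm) cInf_less_iff) (auto intro: bdd_belowI[of _ 0] deriv_nonneg)
  show "\<forall>\<^sub>F x in at_top. r' x < v"
    using eventually_ge_at_top[of x0]
    by eventually_elim (use x0 deriv_antimono[of x0] in force)
qed

lemma exists_deriv_gt_right:
  assumes "0 \<le> l" "v < r' l" "l < b"
  shows "\<exists>z. l < z \<and> z < b \<and> v < r' z"
proof -
  have "(r' \<longlongrightarrow> r' l) (at_right l)"
    using tendsto_deriv_within[OF \<open>0 \<le> l\<close>] by (rule tendsto_within_subset) (use assms in auto)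
  then have "\<forall>\<^sub>F z in at_right l. v < r' z"
    using assms(2) by (rule order_tendstoD)
  moreover have "\<forall>\<^sub>F z in at_right l. l < z \<and> z < b"
    using eventually_at_right_real[OF \<open>l < b\<close>] by eventually_elim auto
  ultimately have "\<forall>\<^sub>F z in at_right l. l < z \<and> z < b \<and> v < r' z"
    by eventually_elim auto
  then show ?thesis
    by (auto dest: eventually_happens)
qed

text \<open>The pathwise drift bound: s is the energy carried over into a slot with arrival x, and g
  is the energy spent out of the battery level min (s + x) c.\<close>

lemma drift_le:
  assumes "0 \<le> s" "0 \<le> x" "0 \<le> g" "g \<le> min (s + x) c"
  shows "r g + r' c * (min (s + x) c - g) \<le> r (min x c) + s * (r' x * indicator {y. y < c} x)"
proof -
  define b where "b = min (s + x) c"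
  have "r' c * (b - g) \<le> r' b * (b - g)"
    using assms by (intro mult_right_mono deriv_antimono) (auto simp: b_def)
  also have "\<dots> \<le> r b - r g"
    using assms by (intro deriv_le_slope) (auto simp: b_def)
  finally have spend: "r g + r' c * (b - g) \<le> r b" by simp
  have "r b \<le> r (min x c) + s * (r' x * indicator {y. y < c} x)"
  proof (cases "x < c")
    case True
    have "r b - r x \<le> r' x * (b - x)"
      using assms True by (intro slope_le_deriv) (auto simp: b_def)
    also have "\<dots> \<le> r' x * s"
      using assms deriv_nonneg[of x] by (intro mult_left_mono) (auto simp: b_def)
    finally show ?thesis using True by (simp add: mult.commute)
  qed (use assms in \<open>auto simp: b_def\<close>)
  with spend show ?thesis by (simp add: b_def)
qed

end

section \<open>Distributions on the half-line\<close>

lemma (in finite_measure) tendsto_integral_bounded_within: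
  fixes f :: "'b::first_countable_topology \<Rightarrow> 'a \<Rightarrow> real"
  assumes meas: "\<And>t. t \<in> S \<Longrightarrow> f t \<in> borel_measurable M" "g \<in> borel_measurable M"
    and bound: "\<And>t y. t \<in> S \<Longrightarrow> y \<in> space M \<Longrightarrow> \<bar>f t y\<bar> \<le> B"
    and lim: "\<And>y. y \<in> space M \<Longrightarrow> ((\<lambda>t. f t y) \<longlongrightarrow> g y) (at x within S)"
  shows "((\<lambda>t. \<integral>y. f t y \<partial>M) \<longlongrightarrow> (\<integral>y. g y \<partial>M)) (at x within S)"
  unfolding tendsto_at_iff_sequentially comp_def
proof safe
  fix X assume X: "\<forall>i. X i \<in> S - {x}" "X \<longlonglongrightarrow> x"
  show "(\<lambda>i. \<integral>y. f (X i) y \<partial>M) \<longlonglongrightarrow> (\<integral>y. g y \<partial>M)"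
  proof (rule integral_dominated_convergence[where w="\<lambda>_. B"])
    show "AE y in M. (\<lambda>i. f (X i) y) \<longlonglongrightarrow> g y"
      using lim X by (auto simp: tendsto_at_iff_sequentially comp_def)
    show "AE y in M. norm (f (X i) y) \<le> B" for i
      using bound X by auto
  qed (use meas X in auto)
qed

lemma Sup_mem_downward_closed:
  fixes C :: "real set"
  assumes "0 \<in> C" "bdd_above C"
    and down: "\<And>x y. y \<in> C \<Longrightarrow> 0 \<le> x \<Longrightarrow> x \<le> y \<Longrightarrow> x \<in> C"
    and left: "\<And>l. 0 < l \<Longrightarrow> \<forall>\<^sub>F t in at_left l. t \<in> C \<Longrightarrow> l \<in> C"
  shows "Sup C \<in> C"
proof (cases "Sup C = 0")
  case False
  have pos: "0 < Sup C"
    using False cSup_upper[OF \<open>0 \<in> C\<close> \<open>bdd_above C\<close>] by simp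
  have "\<forall>\<^sub>F t in at_left (Sup C). t \<in> C"
    using eventually_at_left_real[OF pos]
  proof eventually_elim
    case (elim t)
    then obtain y where "y \<in> C" "t < y"
      using less_cSup_iff[of C t] assms(1,2) by auto
    with elim show ?case by (auto intro: down)
  qed
  then show ?thesis by (rule left[OF pos])
qed (use assms in simp)

locale halfline_distribution = prob_space D for D :: "real measure" +
  assumes sets_halfline: "sets D = sets (restrict_space borel {0..})"
begin

lemma space_halfline: "space D = {0..}"
  using sets_eq_imp_space_eq[OF sets_halfline] by simp

lemma borel_measurable_halfline: "f \<in> borel_measurable borel \<Longrightarrow> f \<in> borel_measurable D"
  using measurable_cong_sets[OF sets_halfline refl] measurable_restrict_space1 by blast

lemma borel_measurable_continuous_halfline:
  "continuous_on {0..} f \<Longrightarrow> f \<in> borel_measurable D"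
  using measurable_cong_sets[OF sets_halfline refl] borel_measurable_continuous_on_restrict
  by blast

lemma integrable_bounded_halfline:
  fixes f :: "real \<Rightarrow> real"
  shows "f \<in> borel_measurable D \<Longrightarrow> (\<And>x. 0 \<le> x \<Longrightarrow> \<bar>f x\<bar> \<le> B) \<Longrightarrow> integrable D f"
  by (rule integrable_const_bound[where B=B]) (auto simp: space_halfline)

lemma borel_measurable_id_halfline[measurable]: "(\<lambda>x. x) \<in> borel_measurable D"
  by (rule borel_measurable_halfline) simp

lemma integrable_indicator_less: "integrable D (\<lambda>y. indicator {y. y < x} y :: real)"
  by (rule integrable_bounded_halfline[where B=1]) (auto simp: indicator_def)

lemma rho_eq_integral: "rho D x = (\<integral>y. indicator {y. y < x} y \<partial>D)"
proof -
  have "{y \<in> space D. y < x} = {y. y < x} \<inter> space D" by auto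
  then show ?thesis by (simp add: rho_def)
qed

lemma rho_nonneg: "0 \<le> rho D x"
  by (simp add: rho_def)

lemma rho_le_1: "rho D x \<le> 1"
  by (simp add: rho_def)

lemma rho_zero: "rho D 0 = 0"
proof -
  have "{y \<in> space D. y < 0} = {}" by (auto simp: space_halfline)
  then show ?thesis by (simp only: rho_def) simp
qed

lemma rho_mono: "x \<le> y \<Longrightarrow> rho D x \<le> rho D y"
  unfolding rho_def by (rule finite_measure_mono) (auto, measurable)

lemma tendsto_integral_indicator_less_left:
  fixes g :: "real \<Rightarrow> real"
  assumes g: "g \<in> borel_measurable D" "\<And>y. 0 \<le> y \<Longrightarrow> \<bar>g y\<bar> \<le> B"
  shows "((\<lambda>t. \<integral>y. g y * indicator {y. y < t} y \<partial>D) \<longlongrightarrow> (\<integral>y. g y * indicator {y. y < x} y \<partial>D))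
           (at_left x)"
proof -
  have "0 \<le> B"
    using g(2)[of 0] abs_ge_zero[of "g 0"] by linarith
  show ?thesis
  proof (rule tendsto_integral_bounded_within[where B=B])
    fix y :: real
    show "((\<lambda>t. g y * indicator {y. y < t} y) \<longlongrightarrow> g y * indicator {y. y < x} y) (at_left x)"
    proof (cases "y < x")
      case True
      have "\<forall>\<^sub>F t in at_left x. g y * indicator {y. y < t} y = g y * indicator {y. y < x} y"
        using eventually_at_left_real[OF True] by eventually_elim (use True in auto)
      then show ?thesis by (rule tendsto_eventually)
    next
      case False
      then show ?thesis
        by (intro tendsto_eventually) (auto simp: eventually_at_filter)
    qed
  qed (use g \<open>0 \<le> B\<close> in \<open>auto simp: space_halfline indicator_def\<close>)
qed

lemma tendsto_rho_left: "(rho D \<longlongrightarrow> rho D x) (at_left x)"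
  using tendsto_integral_indicator_less_left[of "\<lambda>_. 1" 1 x] by (simp add: rho_eq_integral[abs_def])

lemma tendsto_rho_at_top: "(rho D \<longlongrightarrow> 1) at_top"
proof -
  have "((\<lambda>t. \<integral>y. indicator {y. y < t} y \<partial>D) \<longlongrightarrow> (\<integral>y. (1::real) \<partial>D)) at_top"
  proof (rule integral_dominated_convergence_at_top[where w="\<lambda>_. 1"])
    have "\<forall>\<^sub>F t in at_top. indicator {y. y < t} y = (1::real)" for y :: real
      using eventually_gt_at_top[of y] by eventually_elim auto
    then show "AE y in D. ((\<lambda>t. indicator {y. y < t} y :: real) \<longlongrightarrow> 1) at_top"
      by (intro AE_I2 tendsto_eventually)
  qed auto
  then show ?thesis by (simp add: rho_eq_integral[abs_def] prob_space)
qed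

lemma
  shows xlow_nonneg: "0 \<le> xlow D" and rho_pos_above_xlow: "xlow D < x \<Longrightarrow> 0 < rho D x"
proof -
  define T where "T = {x. 0 \<le> x \<and> rho D x = 0}"
  obtain N where N: "1/2 < rho D N"
    using order_tendstoD(1)[OF tendsto_rho_at_top, of "1/2"]
    unfolding eventually_at_top_linorder by auto
  have T_le: "t \<le> N" if "t \<in> T" for t
    using that N rho_mono[of N t] by (cases "t \<le> N") (auto simp: T_def)
  have bdd: "bdd_above T"
    using T_le by (rule bdd_aboveI)
  have "Sup T \<in> T"
  proof (rule Sup_mem_downward_closed[OF _ bdd])
    show "0 \<in> T" by (simp add: T_def rho_zero)
    show "x \<in> T" if "y \<in> T" "0 \<le> x" "x \<le> y" for x y
      using that rho_mono[of x y] rho_nonneg[of x] by (auto simp: T_def)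
    fix l :: real assume "0 < l" and ev: "\<forall>\<^sub>F t in at_left l. t \<in> T"
    have "((\<lambda>_. 0) \<longlongrightarrow> rho D l) (at_left l)"
      by (rule Lim_transform_eventually[OF tendsto_rho_left])
        (use ev in \<open>auto simp: T_def elim: eventually_mono\<close>)
    then show "l \<in> T"
      using \<open>0 < l\<close> by (subst (asm) tendsto_const_iff) (auto simp: T_def)
  qed
  moreover have xlow_eq: "xlow D = Sup T"
    unfolding xlow_def using calculation cSup_upper[OF _ bdd]
    by (intro Greatest_equality) (auto simp: T_def)
  ultimately show "0 \<le> xlow D"
    by (auto simp: T_def)
  assume "xlow D < x"
  then have "x \<notin> T"
    using cSup_upper[OF _ bdd] xlow_eq by force
  then show "0 < rho D x"
    using \<open>xlow D < x\<close> \<open>0 \<le> xlow D\<close> rho_nonneg[of x] by (auto simp: T_def)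
qed

lemma xhigh_cases:
  obtains (infinite) "xhigh D = \<infinity>" "\<And>x. 0 \<le> x \<Longrightarrow> rho D x < 1"
  | (finite) h where "xhigh D = ereal h" "0 \<le> h" "\<And>x. h < x \<Longrightarrow> rho D x = 1"
      "\<And>x. 0 \<le> x \<Longrightarrow> x < h \<Longrightarrow> rho D x < 1"
proof -
  define S where "S = {x. 0 \<le> x \<and> rho D x = 1}"
  show ?thesis
  proof (cases "S = {}")
    case True
    have "xhigh D = Inf (ereal ` S)"
      by (simp add: xhigh_def S_def)
    then have "xhigh D = \<infinity>"
      using True by (simp add: top_ereal_def)
    moreover have "rho D x < 1" if "0 \<le> x" for x
      using True that rho_le_1[of x] by (auto simp: S_def less_le)
    ultimately show ?thesis by (rule infinite)
  next
    case False
    have bdd: "bdd_below S" by (auto simp: S_def intro: bdd_belowI[where m=0])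
    have "xhigh D = ereal (Inf S)"
      using ereal_Inf'[OF bdd False] by (simp add: xhigh_def S_def)
    moreover have "0 \<le> Inf S"
      by (rule cInf_greatest[OF False]) (auto simp: S_def)
    moreover have "rho D x = 1" if x: "Inf S < x" for x
    proof -
      obtain s where "s \<in> S" "s < x"
        using cInf_less_iff[OF False bdd, of x] x by auto
      then show ?thesis using rho_mono[of s x] rho_le_1[of x] by (simp add: S_def)
    qed
    moreover have "rho D x < 1" if "0 \<le> x" "x < Inf S" for x
      using cInf_lower[OF _ bdd, of x] that rho_le_1[of x] by (force simp: S_def less_le)
    ultimately show ?thesis by (rule finite)
  qed
qed

lemma xhigh_finite:
  assumes "xhigh D = ereal h"
  shows "0 \<le> h \<and> (\<forall>x>h. rho D x = 1) \<and> (\<forall>x. 0 \<le> x \<and> x < h \<longrightarrow> rho D x < 1)"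
  using assms by (cases rule: xhigh_cases) auto

end

section \<open>The arrival process\<close>

context halfline_distribution
begin

lemma prob_space_arrivals: "prob_space (arrivals D)"
  unfolding arrivals_def by (rule prob_space_PiM) (rule prob_space_axioms)

lemma space_arrivals: "space (arrivals D) = {\<omega>. \<forall>i. 0 \<le> \<omega> i}"
  unfolding arrivals_def by (auto simp: space_PiM space_halfline PiE_def extensional_def)

lemma measurable_coordinate[measurable]: "(\<lambda>\<omega>. \<omega> i) \<in> measurable (arrivals D) D"
  unfolding arrivals_def by simp

lemma integrable_bounded_arrivals:
  fixes f :: "(nat \<Rightarrow> real) \<Rightarrow> real"
  assumes "f \<in> borel_measurable (arrivals D)" "\<And>\<omega>. \<omega> \<in> space (arrivals D) \<Longrightarrow> \<bar>f \<omega>\<bar> \<le> B"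
  shows "integrable (arrivals D) f"
  using prob_space_arrivals assms
  by (intro finite_measure.integrable_const_bound[where B=B]) (auto simp: prob_space_def)

lemma integral_arrivals_fun_upd:
  fixes g :: "(nat \<Rightarrow> real) \<Rightarrow> real"
  assumes g: "g \<in> borel_measurable (arrivals D)" "\<And>\<omega>. \<omega> \<in> space (arrivals D) \<Longrightarrow> \<bar>g \<omega>\<bar> \<le> B"
  shows "(\<integral>\<omega>. g \<omega> \<partial>arrivals D) = (\<integral>x. (\<integral>X. g (X(j := x)) \<partial>\<Pi>\<^sub>M i\<in>UNIV - {j}. D) \<partial>D)"
proof -
  let ?P = "\<Pi>\<^sub>M i\<in>UNIV - {j}. D"
  interpret P: prob_space ?P by (rule prob_space_PiM) (rule prob_space_axioms)
  interpret DP: pair_prob_space D ?P ..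
  define T where "T p = (snd p)(j := fst p)" for p :: "real \<times> (nat \<Rightarrow> real)"
  have upd: "T \<in> measurable (D \<Otimes>\<^sub>M ?P) (arrivals D)"
    unfolding arrivals_def T_def by (rule measurable_fun_upd[where J="UNIV - {j}"]) auto
  have "insert j (UNIV - {j}) = UNIV" "(\<lambda>(x, X). X(j := x)) = T"
    by (auto simp: T_def)
  then have "distr (D \<Otimes>\<^sub>M ?P) (arrivals D) T = arrivals D"
    using distr_pair_PiM_eq_PiM[of "UNIV - {j}" "\<lambda>_. D" j] prob_space_axioms
    by (simp add: arrivals_def)
  then have "(\<integral>\<omega>. g \<omega> \<partial>arrivals D) = (\<integral>p. g (T p) \<partial>(D \<Otimes>\<^sub>M ?P))"
    using integral_distr[OF upd g(1)] by simp
  also have "\<dots> = (\<integral>x. (\<integral>X. g (X(j := x)) \<partial>?P) \<partial>D)"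
  proof (rule DP.integral_fst'[symmetric, THEN trans])
    show "integrable (D \<Otimes>\<^sub>M ?P) (\<lambda>p. g (T p))"
      using g measurable_space[OF upd]
      by (intro DP.integrable_const_bound[where B=B]) (auto intro: measurable_compose[OF upd])
  qed (simp add: T_def)
  finally show ?thesis .
qed

lemma integral_mult_coordinate:
  fixes u :: "(nat \<Rightarrow> real) \<Rightarrow> real" and h :: "real \<Rightarrow> real"
  assumes u: "u \<in> borel_measurable (arrivals D)" "\<And>\<omega>. \<omega> \<in> space (arrivals D) \<Longrightarrow> \<bar>u \<omega>\<bar> \<le> Bu"
    and u_indep: "\<And>w x. w \<in> space (arrivals D) \<Longrightarrow> 0 \<le> x \<Longrightarrow> u (w(j := x)) = u w"
    and h: "h \<in> borel_measurable D" "\<And>x. 0 \<le> x \<Longrightarrow> \<bar>h x\<bar> \<le> Bh"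
  shows "(\<integral>\<omega>. u \<omega> * h (\<omega> j) \<partial>arrivals D) = (\<integral>\<omega>. u \<omega> \<partial>arrivals D) * (\<integral>x. h x \<partial>D)"
proof -
  let ?P = "\<Pi>\<^sub>M i\<in>UNIV - {j}. D"
  interpret P: prob_space ?P by (rule prob_space_PiM) (rule prob_space_axioms)
  define v where "v X = u (X(j := 0))" for X
  have uv: "u (X(j := x)) = v X" if "X \<in> space ?P" "0 \<le> x" for X x
  proof -
    have "X(j := 0) \<in> space (arrivals D)"
      using that by (auto simp: space_arrivals space_PiM space_halfline)
    from u_indep[OF this \<open>0 \<le> x\<close>] show ?thesis by (simp add: v_def)
  qed
  have key: "(\<integral>\<omega>. u \<omega> * g (\<omega> j) \<partial>arrivals D) = (\<integral>X. v X \<partial>?P) * (\<integral>x. g x \<partial>D)"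
    if g: "g \<in> borel_measurable D" "\<And>x. 0 \<le> x \<Longrightarrow> \<bar>g x\<bar> \<le> B" for g B
  proof -
    have "\<bar>u \<omega> * g (\<omega> j)\<bar> \<le> Bu * B" if "\<omega> \<in> space (arrivals D)" for \<omega>
      using u(2)[OF that] g(2)[of "\<omega> j"] that
      by (auto simp: abs_mult space_arrivals intro!: mult_mono)
    then have "(\<integral>\<omega>. u \<omega> * g (\<omega> j) \<partial>arrivals D)
        = (\<integral>x. (\<integral>X. u (X(j := x)) * g x \<partial>?P) \<partial>D)"
      using u(1) g(1) by (subst integral_arrivals_fun_upd[where B="Bu * B" and j=j]) auto
    also have "\<dots> = (\<integral>x. (\<integral>X. v X * g x \<partial>?P) \<partial>D)"
      by (intro Bochner_Integration.integral_cong refl) (auto simp: uv space_halfline)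
    finally show ?thesis by simp
  qed
  have "(\<integral>\<omega>. u \<omega> \<partial>arrivals D) = (\<integral>X. v X \<partial>?P)"
    using key[of "\<lambda>_. 1" 1] by (simp add: prob_space)
  with key[OF h] show ?thesis by simp
qed

lemma integral_coordinate:
  fixes h :: "real \<Rightarrow> real"
  assumes "h \<in> borel_measurable D" "\<And>x. 0 \<le> x \<Longrightarrow> \<bar>h x\<bar> \<le> B"
  shows "(\<integral>\<omega>. h (\<omega> j) \<partial>arrivals D) = (\<integral>x. h x \<partial>D)"
  using integral_mult_coordinate[of "\<lambda>_. 1" 1 j h B] assms
    prob_space.prob_space[OF prob_space_arrivals]
  by simp

lemma integral_one_minus_indicator_less_coordinate:
  "(\<integral>\<omega>. 1 - indicator {y. y < a} (\<omega> j) \<partial>arrivals D) = 1 - rho D a"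
proof -
  have "(\<integral>\<omega>. 1 - indicator {y. y < a} (\<omega> j) \<partial>arrivals D) = (\<integral>x. 1 - indicator {y. y < a} x \<partial>D :: real)"
    by (rule integral_coordinate[where B=1]) (auto simp: indicator_def)
  then show ?thesis
    using integrable_indicator_less by (simp add: rho_eq_integral prob_space)
qed

end

section \<open>Policies and the greedy policy\<close>

lemma borel_measurable_continuous_on_nonneg_comp:
  fixes h :: "real \<Rightarrow> real"
  assumes h: "continuous_on {0..} h" and g: "g \<in> borel_measurable M"
    and g_nonneg: "\<And>x. x \<in> space M \<Longrightarrow> 0 \<le> g x"
  shows "(\<lambda>x. h (g x)) \<in> borel_measurable M"
proof -
  have "continuous_on UNIV (\<lambda>x. h (max 0 x))"
    by (rule continuous_on_compose2[OF h]) (auto intro!: continuous_intros)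
  then have "(\<lambda>x. h (max 0 x)) \<in> borel_measurable borel"
    by (rule borel_measurable_continuous_onI)
  from measurable_compose[OF g this] show ?thesis
    by (rule measurable_cong[THEN iffD1, rotated]) (use g_nonneg in \<open>auto simp: max_def\<close>)
qed

lemma throughput_eqI:
  assumes "(\<lambda>n. (\<Sum>t=1..n. \<integral>\<omega>. r (power f t \<omega>) \<partial>arrivals D) / real n) \<longlonglongrightarrow> L"
  shows "throughput D r f = ereal L"
  unfolding throughput_def by (rule lim_imp_Liminf) (use assms in \<open>auto intro: tendsto_ereal\<close>)

(* The case t = 0 keeps the policy causal: f 0 may not depend on any arrival. *)
definition greedy_policy :: "real \<Rightarrow> nat \<Rightarrow> (nat \<Rightarrow> real) \<Rightarrow> real" where
  "greedy_policy c t \<omega> = (if t = 0 then 0 else min (\<omega> t) c)"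

lemma battery_greedy_policy: "battery (greedy_policy c) c \<omega> t = power (greedy_policy c) t \<omega>"
  by (induction t) (simp_all add: power_def greedy_policy_def)

locale energy_system = concave_reward r r' + halfline_distribution D
  for r r' :: "real \<Rightarrow> real" and D :: "real measure" +
  fixes c :: real
  assumes capacity_nonneg: "0 \<le> c"
begin

definition greedy_reward :: real where
  "greedy_reward = (\<integral>x. r (min x c) \<partial>D)"

definition deriv_mean_below :: "real \<Rightarrow> real" where
  "deriv_mean_below x = (\<integral>y. r' y * indicator {y. y < x} y \<partial>D)"

definition stored :: "(nat \<Rightarrow> (nat \<Rightarrow> real) \<Rightarrow> real) \<Rightarrow> nat \<Rightarrow> (nat \<Rightarrow> real) \<Rightarrow> real" where
  "stored f t \<omega> = battery f c \<omega> t - power f t \<omega>"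

lemmas borel_measurable_reward_comp =
  borel_measurable_continuous_on_nonneg_comp[OF reward_continuous]

lemmas borel_measurable_deriv_comp =
  borel_measurable_continuous_on_nonneg_comp[OF deriv_continuous]

lemma borel_measurable_reward_min[measurable]: "(\<lambda>x. r (min x c)) \<in> borel_measurable D"
  using capacity_nonneg
  by (intro borel_measurable_reward_comp) (auto simp: space_halfline)

lemma borel_measurable_deriv[measurable]: "r' \<in> borel_measurable D"
  by (rule borel_measurable_continuous_halfline[OF deriv_continuous])

lemma borel_measurable_deriv_indicator[measurable]:
  "(\<lambda>y. r' y * indicator {y. y < x} y) \<in> borel_measurable D"
  by measurable

lemma abs_deriv_indicator_le: "0 \<le> y \<Longrightarrow> \<bar>r' y * indicator {y. y < x} y\<bar> \<le> r' 0"
  using abs_deriv_le[of y] deriv_nonneg[of 0] by (auto simp: indicator_def)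

lemma integrable_deriv_indicator: "integrable D (\<lambda>y. r' y * indicator {y. y < x} y)"
  by (rule integrable_bounded_halfline[OF _ abs_deriv_indicator_le]) measurable

lemma integral_reward_min_coordinate: "(\<integral>\<omega>. r (min (\<omega> t) c) \<partial>arrivals D) = greedy_reward"
  unfolding greedy_reward_def using capacity_nonneg abs_reward_le
  by (intro integral_coordinate[where B="r c"]) auto

lemma power_battery_causal:
  assumes f: "online_policy D f" and \<omega>: "\<omega> \<in> space (arrivals D)" "\<omega>' \<in> space (arrivals D)"
    and agree: "\<forall>i\<in>{1..t}. \<omega> i = \<omega>' i"
  shows "battery f c \<omega> t = battery f c \<omega>' t \<and> power f t \<omega> = power f t \<omega>'"
  using agree
proof (induction t)
  case (Suc t)
  then have "f (Suc t) \<omega> = f (Suc t) \<omega>'"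
    using f \<omega> unfolding online_policy_def by blast
  with Suc show ?case by (simp add: power_def)
qed (simp add: power_def)

lemma borel_measurable_power_battery:
  assumes "online_policy D f"
  shows "power f t \<in> borel_measurable (arrivals D)"
    and "(\<lambda>\<omega>. battery f c \<omega> t) \<in> borel_measurable (arrivals D)"
proof -
  have "power f t \<in> borel_measurable (arrivals D) \<and> (\<lambda>\<omega>. battery f c \<omega> t) \<in> borel_measurable (arrivals D)"
  proof (induction t)
    case (Suc t)
    then have [measurable]: "power f t \<in> borel_measurable (arrivals D)"
        "(\<lambda>\<omega>. battery f c \<omega> t) \<in> borel_measurable (arrivals D)"
      by auto
    have "power f (Suc t) = f (Suc t)"
      by (auto simp: power_def)
    then have [measurable]: "power f (Suc t) \<in> borel_measurable (arrivals D)"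
      using assms by (simp add: online_policy_def)
    show ?case by simp measurable
  qed (simp add: power_def)
  then show "power f t \<in> borel_measurable (arrivals D)"
    and "(\<lambda>\<omega>. battery f c \<omega> t) \<in> borel_measurable (arrivals D)"
    by auto
qed

lemma admissible_bounds:
  assumes "admissible D c f" "\<omega> \<in> space (arrivals D)"
  shows "0 \<le> power f t \<omega>" "power f t \<omega> \<le> battery f c \<omega> t" "battery f c \<omega> t \<le> c"
  using assms capacity_nonneg by (auto simp: admissible_def) (cases t; simp)

lemma throughput_le_gamma_star: "admissible D c f \<Longrightarrow> throughput D r f \<le> gamma_star D r c"
  unfolding gamma_star_def by (rule SUP_upper) auto

lemma gamma_star_le: "(\<And>f. admissible D c f \<Longrightarrow> throughput D r f \<le> x) \<Longrightarrow> gamma_star D r c \<le> x"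
  unfolding gamma_star_def by (rule SUP_least) auto

lemma admissible_greedy_policy: "admissible D c (greedy_policy c)"
  unfolding admissible_def online_policy_def
proof (intro conjI allI ballI impI)
  fix t
  show "greedy_policy c t \<in> borel_measurable (arrivals D)"
    unfolding greedy_policy_def by measurable
  fix \<omega> \<omega>' :: "nat \<Rightarrow> real" assume "\<forall>i\<in>{1..t}. \<omega> i = \<omega>' i"
  then show "greedy_policy c t \<omega> = greedy_policy c t \<omega>'"
    by (simp add: greedy_policy_def)
next
  fix \<omega> t assume "\<omega> \<in> space (arrivals D)"
  then show "0 \<le> power (greedy_policy c) t \<omega>" "power (greedy_policy c) t \<omega> \<le> battery (greedy_policy c) c \<omega> t"
    using capacity_nonneg by (auto simp: battery_greedy_policy power_def greedy_policy_def space_arrivals)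
qed

lemma throughput_greedy_policy: "throughput D r (greedy_policy c) = ereal greedy_reward"
proof (rule throughput_eqI)
  have sum: "(\<Sum>t=1..n. \<integral>\<omega>. r (power (greedy_policy c) t \<omega>) \<partial>arrivals D) = real n * greedy_reward"
    for n by (simp add: power_def greedy_policy_def integral_reward_min_coordinate)
  have "\<forall>\<^sub>F n in sequentially.
      (\<Sum>t=1..n. \<integral>\<omega>. r (power (greedy_policy c) t \<omega>) \<partial>arrivals D) / real n = greedy_reward"
    using eventually_gt_at_top[of "0::nat"] by eventually_elim (simp only: sum, simp)
  then show "(\<lambda>n. (\<Sum>t=1..n. \<integral>\<omega>. r (power (greedy_policy c) t \<omega>) \<partial>arrivals D) / real n) \<longlonglongrightarrow> greedy_reward"
    by (rule tendsto_eventually)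
qed

end

section \<open>Optimality of the greedy policy below the threshold\<close>

context energy_system
begin

lemma stored_bounds:
  assumes "admissible D c f" "\<omega> \<in> space (arrivals D)"
  shows "0 \<le> stored f t \<omega>" "stored f t \<omega> \<le> c"
  using admissible_bounds[OF assms, of t] by (auto simp: stored_def)

lemma battery_Suc_stored: "battery f c \<omega> (Suc t) = min (stored f t \<omega> + \<omega> (Suc t)) c"
  by (simp add: stored_def)

lemma borel_measurable_stored:
  assumes "online_policy D f"
  shows "stored f t \<in> borel_measurable (arrivals D)"
  using borel_measurable_power_battery[OF assms] unfolding stored_def[abs_def] by measurable

lemma stored_fun_upd_Suc:
  assumes "online_policy D f" "w \<in> space (arrivals D)" "0 \<le> x"
  shows "stored f n (w(Suc n := x)) = stored f n w"
proof -
  have "w(Suc n := x) \<in> space (arrivals D)"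
    using assms by (auto simp: space_arrivals)
  from power_battery_causal[OF assms(1) this assms(2)] show ?thesis
    by (auto simp: stored_def)
qed

lemma integrable_reward_power:
  assumes "admissible D c f"
  shows "integrable (arrivals D) (\<lambda>\<omega>. r (power f t \<omega>))"
proof (rule integrable_bounded_arrivals[where B="r c"])
  show "(\<lambda>\<omega>. r (power f t \<omega>)) \<in> borel_measurable (arrivals D)"
    using assms admissible_bounds[OF assms]
    by (intro borel_measurable_reward_comp borel_measurable_power_battery) (auto simp: admissible_def)
  fix \<omega> assume "\<omega> \<in> space (arrivals D)"
  with admissible_bounds[OF assms this, of t] show "\<bar>r (power f t \<omega>)\<bar> \<le> r c"
    by (intro abs_reward_le) auto
qed

lemma integrable_stored:
  assumes "admissible D c f"
  shows "integrable (arrivals D) (stored f t)"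
  using assms stored_bounds[OF assms]
  by (intro integrable_bounded_arrivals[where B=c] borel_measurable_stored) (auto simp: admissible_def)

lemma integrable_reward_min_coordinate: "integrable (arrivals D) (\<lambda>\<omega>. r (min (\<omega> t) c))"
  using capacity_nonneg abs_reward_le
  by (intro integrable_bounded_arrivals[where B="r c"]) (auto simp: space_arrivals)

lemma drift_stored_le:
  assumes f: "admissible D c f" and \<omega>: "\<omega> \<in> space (arrivals D)"
  shows "r (power f (Suc n) \<omega>) + r' c * stored f (Suc n) \<omega>
      \<le> r (min (\<omega> (Suc n)) c) + stored f n \<omega> * (r' (\<omega> (Suc n)) * indicator {y. y < c} (\<omega> (Suc n)))"
proof -
  have stored_Suc: "stored f (Suc n) \<omega> = min (stored f n \<omega> + \<omega> (Suc n)) c - power f (Suc n) \<omega>"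
    by (simp only: stored_def[of f "Suc n"] battery_Suc_stored)
  have "power f (Suc n) \<omega> \<le> min (stored f n \<omega> + \<omega> (Suc n)) c"
    using admissible_bounds(2)[OF f \<omega>, of "Suc n"] by (simp only: battery_Suc_stored)
  then show ?thesis
    unfolding stored_Suc using stored_bounds[OF f \<omega>] admissible_bounds[OF f \<omega>] \<omega>
    by (intro drift_le) (auto simp: space_arrivals)
qed

text \<open>The energy stored at the end of slot n does not depend on the arrival in slot n + 1, so
  the expectation of the product factorises.\<close>

lemma integral_stored_mult_deriv_indicator:
  assumes f: "admissible D c f"
  shows "(\<integral>\<omega>. stored f n \<omega> * (r' (\<omega> (Suc n)) * indicator {y. y < c} (\<omega> (Suc n))) \<partial>arrivals D)
      = (\<integral>\<omega>. stored f n \<omega> \<partial>arrivals D) * deriv_mean_below c"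
  unfolding deriv_mean_below_def
proof (rule integral_mult_coordinate[where Bu=c and Bh="r' 0"])
  have "online_policy D f"
    using f by (simp add: admissible_def)
  then show "stored f n \<in> borel_measurable (arrivals D)"
    "\<And>w x. w \<in> space (arrivals D) \<Longrightarrow> 0 \<le> x \<Longrightarrow> stored f n (w(Suc n := x)) = stored f n w"
    by (auto intro: borel_measurable_stored stored_fun_upd_Suc)
qed (use stored_bounds[OF f] abs_deriv_indicator_le in auto)

lemma expected_drift_le:
  assumes f: "admissible D c f"
  shows "(\<integral>\<omega>. r (power f (Suc n) \<omega>) \<partial>arrivals D) + r' c * (\<integral>\<omega>. stored f (Suc n) \<omega> \<partial>arrivals D)
      \<le> greedy_reward + (\<integral>\<omega>. stored f n \<omega> \<partial>arrivals D) * deriv_mean_below c"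
proof -
  have "online_policy D f"
    using f by (simp add: admissible_def)
  note [measurable] = borel_measurable_stored[OF this]
  have int_product: "integrable (arrivals D)
      (\<lambda>\<omega>. stored f n \<omega> * (r' (\<omega> (Suc n)) * indicator {y. y < c} (\<omega> (Suc n))))"
  proof (rule integrable_bounded_arrivals[where B="c * r' 0"])
    fix \<omega> assume \<omega>: "\<omega> \<in> space (arrivals D)"
    show "\<bar>stored f n \<omega> * (r' (\<omega> (Suc n)) * indicator {y. y < c} (\<omega> (Suc n)))\<bar> \<le> c * r' 0"
      using stored_bounds[OF f \<omega>, of n] abs_deriv_indicator_le[of "\<omega> (Suc n)" c] \<omega>
      by (auto simp: abs_mult space_arrivals intro!: mult_mono)
  qed measurable
  have "(\<integral>\<omega>. r (power f (Suc n) \<omega>) \<partial>arrivals D) + r' c * (\<integral>\<omega>. stored f (Suc n) \<omega> \<partial>arrivals D)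
      = (\<integral>\<omega>. r (power f (Suc n) \<omega>) + r' c * stored f (Suc n) \<omega> \<partial>arrivals D)"
    using integrable_reward_power[OF f] integrable_stored[OF f] by simp
  also have "\<dots> \<le> (\<integral>\<omega>. r (min (\<omega> (Suc n)) c)
      + stored f n \<omega> * (r' (\<omega> (Suc n)) * indicator {y. y < c} (\<omega> (Suc n))) \<partial>arrivals D)"
    using drift_stored_le[OF f] integrable_reward_power[OF f] integrable_stored[OF f]
      integrable_reward_min_coordinate int_product
    by (intro integral_mono) auto
  also have "\<dots> = greedy_reward + (\<integral>\<omega>. stored f n \<omega> \<partial>arrivals D) * deriv_mean_below c"
    using integrable_reward_min_coordinate int_product
    by (simp add: integral_reward_min_coordinate integral_stored_mult_deriv_indicator[OF f])
  finally show ?thesis .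
qed

lemma sum_expected_reward_le:
  assumes f: "admissible D c f" and below: "deriv_mean_below c \<le> r' c"
  shows "(\<Sum>t=1..n. \<integral>\<omega>. r (power f t \<omega>) \<partial>arrivals D) \<le> real n * greedy_reward"
proof -
  have "(\<Sum>t=1..n. \<integral>\<omega>. r (power f t \<omega>) \<partial>arrivals D) + r' c * (\<integral>\<omega>. stored f n \<omega> \<partial>arrivals D)
      \<le> real n * greedy_reward"
  proof (induction n)
    case 0
    then show ?case by (simp add: stored_def power_def)
  next
    case (Suc n)
    have "(\<integral>\<omega>. stored f n \<omega> \<partial>arrivals D) * deriv_mean_below c
        \<le> r' c * (\<integral>\<omega>. stored f n \<omega> \<partial>arrivals D)"
      using below stored_bounds[OF f]
      by (subst mult.commute) (intro mult_right_mono integral_nonneg; auto)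
    then show ?case
      using Suc.IH expected_drift_le[OF f, of n] by (simp add: algebra_simps)
  qed
  moreover have "0 \<le> r' c * (\<integral>\<omega>. stored f n \<omega> \<partial>arrivals D)"
    using stored_bounds[OF f] capacity_nonneg deriv_nonneg
    by (intro mult_nonneg_nonneg integral_nonneg) auto
  ultimately show ?thesis by linarith
qed

lemma throughput_le_greedy_reward:
  assumes "admissible D c f" "deriv_mean_below c \<le> r' c"
  shows "throughput D r f \<le> ereal greedy_reward"
  unfolding throughput_def
proof (rule Liminf_le)
  show "\<forall>\<^sub>F n in sequentially.
      ereal ((\<Sum>t=1..n. \<integral>\<omega>. r (power f t \<omega>) \<partial>arrivals D) / real n) \<le> ereal greedy_reward"
    using eventually_gt_at_top[of "0::nat"]
    by eventually_elim (use sum_expected_reward_le[OF assms] in \<open>simp add: divide_le_eq mult.commute\<close>)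
qed simp

lemma greedy_optimal_if_deriv_mean_below_le:
  assumes "deriv_mean_below c \<le> r' c"
  shows "greedy_optimal D r c"
proof -
  have "gamma_star D r c \<le> ereal greedy_reward"
    using throughput_le_greedy_reward[OF _ assms] by (rule gamma_star_le)
  moreover have "ereal greedy_reward \<le> gamma_star D r c"
    using throughput_le_gamma_star[OF admissible_greedy_policy] throughput_greedy_policy by simp
  ultimately show ?thesis
    by (simp add: greedy_optimal_def greedy_reward_def)
qed

lemma not_greedy_optimal_if_better_policy:
  assumes "admissible D c f" "ereal greedy_reward < throughput D r f"
  shows "\<not> greedy_optimal D r c"
  using throughput_le_gamma_star[OF assms(1)] assms(2)
  by (simp add: greedy_optimal_def greedy_reward_def)

end

section \<open>The threshold\<close>

context energy_system
begin

lemma deriv_mean_below_mono: "x \<le> y \<Longrightarrow> deriv_mean_below x \<le> deriv_mean_below y"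
  unfolding deriv_mean_below_def
  by (intro integral_mono integrable_deriv_indicator)
    (auto simp: space_halfline indicator_def intro: deriv_nonneg)

lemma deriv_mean_below_zero: "deriv_mean_below 0 = 0"
proof -
  have "deriv_mean_below 0 = (\<integral>y. 0 \<partial>D)"
    unfolding deriv_mean_below_def
    by (rule Bochner_Integration.integral_cong) (auto simp: space_halfline)
  then show ?thesis by simp
qed

lemma tendsto_deriv_mean_below_left: "(deriv_mean_below \<longlongrightarrow> deriv_mean_below x) (at_left x)"
  unfolding deriv_mean_below_def[abs_def]
  by (rule tendsto_integral_indicator_less_left[OF borel_measurable_deriv abs_deriv_le])

lemma deriv_mean_below_ge:
  assumes "0 \<le> z" "z \<le> x"
  shows "r' x * rho D x + (r' z - r' x) * rho D z \<le> deriv_mean_below x"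
proof -
  have "r' x * rho D x + (r' z - r' x) * rho D z =
      (\<integral>y. r' x * indicator {y. y < x} y + (r' z - r' x) * indicator {y. y < z} y \<partial>D)"
    unfolding rho_eq_integral using integrable_indicator_less by simp
  also have "\<dots> \<le> deriv_mean_below x"
    unfolding deriv_mean_below_def
  proof (rule integral_mono)
    fix y assume "y \<in> space D"
    then have "0 \<le> y" by (simp add: space_halfline)
    then show "r' x * indicator {y. y < x} y + (r' z - r' x) * indicator {y. y < z} y
        \<le> r' y * indicator {y. y < x} y"
      using assms deriv_antimono[of y z] deriv_antimono[of y x] by (auto simp: indicator_def)
  qed (use integrable_indicator_less integrable_deriv_indicator in auto)
  finally show ?thesis .
qed

lemma cstar_set_eq: "cstar_set D r' = {x. 0 \<le> x \<and> deriv_mean_below x \<le> r' x}"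
  by (simp add: cstar_set_def deriv_mean_below_def)

lemma deriv_xhigh_lt_deriv_mean_below:
  assumes h: "xhigh D = ereal h" and hyp: "r' h < r' (xlow D)"
    and x: "h \<le> x" "rho D x = 1"
  shows "r' h < deriv_mean_below x"
proof -
  have h0: "0 \<le> h" and rho_above: "\<And>t. h < t \<Longrightarrow> rho D t = 1"
    using xhigh_finite[OF h] by auto
  have "xlow D < h"
    using hyp deriv_antimono[of h "xlow D"] h0 by force
  then obtain z where z: "xlow D < z" "z < h" "r' h < r' z"
    using exists_deriv_gt_right[OF xlow_nonneg hyp] by blast
  define p where "p = rho D z"
  have p: "0 < p"
    using rho_pos_above_xlow[OF z(1)] by (simp add: p_def)
  have z0: "0 \<le> z" using xlow_nonneg z(1) by simp
  have lower: "(1 - p) * r' t + p * r' z \<le> deriv_mean_below t" if "z \<le> t" "rho D t = 1" for t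
    using deriv_mean_below_ge[OF z0 that(1)] that(2) by (simp add: p_def algebra_simps)
  have gain: "r' h < (1 - p) * r' h + p * r' z"
    using p z(3) by (simp add: algebra_simps)
  show ?thesis
  proof (cases "h = x")
    case True
    then show ?thesis using gain lower[of x] x z by simp
  next
    case False
    then have "h < x" using x by simp
    have "((\<lambda>t. (1 - p) * r' t + p * r' z) \<longlongrightarrow> (1 - p) * r' h + p * r' z) (at_right h)"
      by (intro tendsto_intros tendsto_within_subset[OF tendsto_deriv_within[OF h0]]) (use h0 in auto)
    then have "\<forall>\<^sub>F t in at_right h. r' h < (1 - p) * r' t + p * r' z"
      using gain by (rule order_tendstoD)
    moreover have "\<forall>\<^sub>F t in at_right h. h < t \<and> t < x"
      using eventually_at_right_real[OF \<open>h < x\<close>] by eventually_elim auto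
    ultimately obtain t where t: "h < t" "t < x" "r' h < (1 - p) * r' t + p * r' z"
      by (auto dest: eventually_happens[OF eventually_conj])
    then have "r' h < deriv_mean_below t"
      using lower[of t] rho_above[of t] z by simp
    also have "\<dots> \<le> deriv_mean_below x"
      using t by (intro deriv_mean_below_mono) simp
    finally show ?thesis .
  qed
qed

lemma exists_deriv_lt_deriv_mean_below_at_top:
  assumes hyp: "(INF x\<in>{0..}. r' x) < r' (xlow D)"
  shows "\<exists>x\<ge>0. r' x < deriv_mean_below x"
proof -
  define L where "L = (INF x\<in>{0..}. r' x)"
  obtain z where z: "xlow D < z" "L < r' z"
    using exists_deriv_gt_right[OF xlow_nonneg hyp[folded L_def], of "xlow D + 1"] by auto
  define p where "p = rho D z"
  have p: "0 < p"
    using rho_pos_above_xlow[OF z(1)] by (simp add: p_def)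
  define m where "m = L + (r' z - L) * p / 2"
  have "((\<lambda>x. r' x * rho D x + (r' z - r' x) * p) \<longlongrightarrow> L * 1 + (r' z - L) * p) at_top"
    by (intro tendsto_intros tendsto_deriv_at_top[folded L_def] tendsto_rho_at_top)
  then have "\<forall>\<^sub>F x in at_top. m < r' x * rho D x + (r' z - r' x) * p"
    using p z(2) by (intro order_tendstoD(1)) (auto simp: m_def field_simps)
  moreover have "\<forall>\<^sub>F x in at_top. r' x < m"
    using p z(2) by (intro order_tendstoD(2)[OF tendsto_deriv_at_top[folded L_def]]) (simp add: m_def)
  ultimately have "\<forall>\<^sub>F x in at_top. z \<le> x \<and> r' x < r' x * rho D x + (r' z - r' x) * p"
    using eventually_ge_at_top[of z] by eventually_elim auto
  then obtain x where "z \<le> x" "r' x < r' x * rho D x + (r' z - r' x) * p"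
    by (auto simp: eventually_at_top_linorder)
  moreover have "0 \<le> z"
    using xlow_nonneg z(1) by simp
  ultimately show ?thesis
    using deriv_mean_below_ge[of z x] by (auto simp: p_def intro!: exI[of _ x])
qed

lemma exists_deriv_lt_deriv_mean_below:
  assumes hyp: "deriv_at_xhigh r' D < r' (xlow D)"
  shows "\<exists>x\<ge>0. r' x < deriv_mean_below x"
proof (cases rule: xhigh_cases)
  case infinite
  then show ?thesis
    using hyp tendsto_Lim[OF _ tendsto_deriv_at_top]
    by (intro exists_deriv_lt_deriv_mean_below_at_top) (simp add: deriv_at_xhigh_def)
next
  case (finite h)
  have "r' h < deriv_mean_below (h + 1)"
    using hyp finite(1,3)
    by (intro deriv_xhigh_lt_deriv_mean_below) (auto simp: deriv_at_xhigh_def)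
  moreover have "r' (h + 1) \<le> r' h"
    using finite(2) by (intro deriv_antimono) auto
  ultimately show ?thesis
    using finite(2) by (intro exI[of _ "h + 1"]) auto
qed

lemma cstar_set_has_greatest:
  assumes hyp: "deriv_at_xhigh r' D < r' (xlow D)"
  shows "Sup (cstar_set D r') \<in> cstar_set D r'" "\<And>y. y \<in> cstar_set D r' \<Longrightarrow> y \<le> Sup (cstar_set D r')"
proof -
  define C where "C = cstar_set D r'"
  have C: "x \<in> C \<longleftrightarrow> 0 \<le> x \<and> deriv_mean_below x \<le> r' x" for x
    by (simp add: C_def cstar_set_eq)
  have down: "x \<in> C" if "y \<in> C" "0 \<le> x" "x \<le> y" for x y
    using that deriv_mean_below_mono[of x y] deriv_antimono[of x y] by (auto simp: C)
  obtain x0 where x0: "0 \<le> x0" "r' x0 < deriv_mean_below x0"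
    using exists_deriv_lt_deriv_mean_below[OF hyp] by blast
  have "y \<le> x0" if "y \<in> C" for y
    using down[OF that x0(1)] x0 by (cases "y \<le> x0") (auto simp: C)
  then have bdd: "bdd_above C"
    by (rule bdd_aboveI)
  have "Sup C \<in> C"
  proof (rule Sup_mem_downward_closed[OF _ bdd down])
    show "0 \<in> C"
      using deriv_mean_below_zero deriv_nonneg[of 0] by (simp add: C)
    fix l :: real assume "0 < l" and ev: "\<forall>\<^sub>F t in at_left l. t \<in> C"
    have lim: "(r' \<longlongrightarrow> r' l) (at_left l)"
      using isCont_deriv[OF \<open>0 < l\<close>] by (auto simp: isCont_def intro: tendsto_within_subset)
    have "deriv_mean_below l \<le> r' l"
      by (rule tendsto_le[OF _ lim tendsto_deriv_mean_below_left])
        (use ev in \<open>auto simp: C elim: eventually_mono\<close>)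
    then show "l \<in> C"
      using \<open>0 < l\<close> by (simp add: C)
  qed auto
  then show "Sup C \<in> C" "\<And>y. y \<in> C \<Longrightarrow> y \<le> Sup C"
    using bdd by (auto intro: cSup_upper)
qed

end

section \<open>Improving on the greedy policy above the threshold\<close>

lemma averages_alternating_tendsto:
  fixes u :: "nat \<Rightarrow> real"
  assumes odd: "\<And>t. odd t \<Longrightarrow> u t = A" and even: "\<And>t. even t \<Longrightarrow> t \<noteq> 0 \<Longrightarrow> u t = B"
  shows "(\<lambda>n. (\<Sum>t=1..n. u t) / real n) \<longlonglongrightarrow> (A + B) / 2"
proof -
  define e where "e n = (if odd n then A - B else 0)" for n :: nat
  have sum: "2 * (\<Sum>t=1..n. u t) = real n * (A + B) + e n" for n
  proof (induction n)
    case (Suc n)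
    then show ?case
      using odd[of "Suc n"] even[of "Suc n"] by (cases "odd n") (auto simp: e_def algebra_simps)
  qed (simp add: e_def)
  have "(\<lambda>n. e n / (2 * real n)) \<longlonglongrightarrow> 0"
  proof (rule Lim_null_comparison)
    show "\<forall>\<^sub>F n in sequentially. norm (e n / (2 * real n)) \<le> \<bar>A - B\<bar> / real n"
      using eventually_gt_at_top[of "0::nat"]
    proof eventually_elim
      case (elim n)
      have "\<bar>e n\<bar> \<le> \<bar>A - B\<bar>" by (simp add: e_def)
      then show ?case using elim by (auto simp: abs_divide intro!: frac_le)
    qed
  qed (rule lim_const_over_n)
  then have "(\<lambda>n. (A + B) / 2 + e n / (2 * real n)) \<longlonglongrightarrow> (A + B) / 2 + 0"
    by (intro tendsto_intros)
  moreover have "\<forall>\<^sub>F n in sequentially. (A + B) / 2 + e n / (2 * real n) = (\<Sum>t=1..n. u t) / real n"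
    using eventually_gt_at_top[of "0::nat"]
  proof eventually_elim
    case (elim n)
    have sum_n: "(\<Sum>t=1..n. u t) = (real n * (A + B) + e n) / 2"
      using sum[of n] by simp
    show ?case
      unfolding sum_n using elim by (simp add: field_simps)
  qed
  ultimately show ?thesis
    by (auto intro: Lim_transform_eventually)
qed

definition saving :: "real \<Rightarrow> real \<Rightarrow> real \<Rightarrow> real" where
  "saving a d x = (if a \<le> x then d else 0)"

definition saving_policy :: "real \<Rightarrow> real \<Rightarrow> real \<Rightarrow> nat \<Rightarrow> (nat \<Rightarrow> real) \<Rightarrow> real" where
  "saving_policy c a d t \<omega> =
     (if t = 0 then 0
      else if odd t then min (\<omega> t) c - saving a d (\<omega> t)
      else min (saving a d (\<omega> (t - 1)) + \<omega> t) c)"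

lemma battery_saving_policy:
  "battery (saving_policy c a d) c \<omega> t =
     (if odd t then min (\<omega> t) c else power (saving_policy c a d) t \<omega>)"
proof (induction t)
  case (Suc t)
  then show ?case
    by (cases "odd t") (auto simp: power_def saving_policy_def)
qed (simp add: power_def)

context energy_system
begin

lemma admissible_saving_policy:
  assumes "0 \<le> d" "d \<le> a" "a \<le> c"
  shows "admissible D c (saving_policy c a d)"
  unfolding admissible_def online_policy_def
proof (intro conjI allI ballI impI)
  fix t
  show "saving_policy c a d t \<in> borel_measurable (arrivals D)"
    unfolding saving_policy_def saving_def by measurable
  fix \<omega> \<omega>' :: "nat \<Rightarrow> real" assume agree: "\<forall>i\<in>{1..t}. \<omega> i = \<omega>' i"
  show "saving_policy c a d t \<omega> = saving_policy c a d t \<omega>'"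
  proof (cases "t = 0")
    case False
    then have "\<omega> t = \<omega>' t" "odd t \<or> \<omega> (t - 1) = \<omega>' (t - 1)"
      using agree by (auto simp: dvd_def)
    then show ?thesis by (auto simp: saving_policy_def)
  qed (simp add: saving_policy_def)
next
  fix \<omega> t assume "\<omega> \<in> space (arrivals D)"
  then have "0 \<le> \<omega> i" for i by (simp add: space_arrivals)
  then show "0 \<le> power (saving_policy c a d) t \<omega>"
    "power (saving_policy c a d) t \<omega> \<le> battery (saving_policy c a d) c \<omega> t"
    using assms capacity_nonneg
    by (auto simp: battery_saving_policy power_def saving_policy_def saving_def)
qed

lemma reward_increment_bounds:
  assumes "0 \<le> d" "0 \<le> x"
  shows "0 \<le> r (min (d + x) c) - r (min x c)" "r (min (d + x) c) - r (min x c) \<le> r c"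
proof -
  have "r (min x c) \<le> r (min (d + x) c)" "r (min (d + x) c) \<le> r c"
    using assms capacity_nonneg by (auto intro: reward_le)
  moreover have "0 \<le> r (min x c)"
    using assms capacity_nonneg reward_nonneg by simp
  ultimately show "0 \<le> r (min (d + x) c) - r (min x c)" "r (min (d + x) c) - r (min x c) \<le> r c"
    by simp_all
qed

lemma borel_measurable_reward_increment:
  "0 \<le> d \<Longrightarrow> (\<lambda>x. r (min (d + x) c) - r (min x c)) \<in> borel_measurable D"
  using capacity_nonneg
  by (intro borel_measurable_diff borel_measurable_reward_comp) (auto simp: space_halfline)

lemma integrable_reward_increment:
  "0 \<le> d \<Longrightarrow> integrable D (\<lambda>x. r (min (d + x) c) - r (min x c))"
  using reward_increment_bounds
  by (intro integrable_bounded_halfline[where B="r c"] borel_measurable_reward_increment) auto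

lemma expected_reward_saving_policy_odd:
  assumes "0 \<le> d" "d \<le> a" "a \<le> c" "odd t"
  shows "(\<integral>\<omega>. r (power (saving_policy c a d) t \<omega>) \<partial>arrivals D) = (\<integral>x. r (min x c - saving a d x) \<partial>D)"
proof -
  have "power (saving_policy c a d) t \<omega> = min (\<omega> t) c - saving a d (\<omega> t)" for \<omega>
    using assms by (auto simp: power_def saving_policy_def)
  moreover have "(\<integral>\<omega>. r (min (\<omega> t) c - saving a d (\<omega> t)) \<partial>arrivals D) = (\<integral>x. r (min x c - saving a d x) \<partial>D)"
  proof (rule integral_coordinate[where B="r c"])
    show "(\<lambda>x. r (min x c - saving a d x)) \<in> borel_measurable D"
      using assms by (intro borel_measurable_reward_comp) (auto simp: saving_def space_halfline)
    show "\<bar>r (min x c - saving a d x)\<bar> \<le> r c" if "0 \<le> x" for x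
      using assms that by (intro abs_reward_le) (auto simp: saving_def)
  qed
  ultimately show ?thesis by simp
qed

lemma expected_reward_saving_policy_even:
  assumes "0 \<le> d" "even t" "t \<noteq> 0"
  shows "(\<integral>\<omega>. r (power (saving_policy c a d) t \<omega>) \<partial>arrivals D)
      = greedy_reward + (1 - rho D a) * (\<integral>x. r (min (d + x) c) - r (min x c) \<partial>D)"
proof -
  define u :: "(nat \<Rightarrow> real) \<Rightarrow> real" where "u \<omega> = 1 - indicator {y. y < a} (\<omega> (t - 1))" for \<omega>
  define h where "h x = r (min (d + x) c) - r (min x c)" for x
  have [measurable]: "h \<in> borel_measurable D"
    unfolding h_def using assms(1) by (rule borel_measurable_reward_increment)
  have h_bound: "\<bar>h x\<bar> \<le> r c" if "0 \<le> x" for x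
    using reward_increment_bounds[OF assms(1) that] by (simp add: h_def)
  have u_bound: "\<bar>u \<omega>\<bar> \<le> 1" for \<omega>
    by (simp add: u_def indicator_def)
  have [measurable]: "u \<in> borel_measurable (arrivals D)"
    unfolding u_def by measurable
  have "power (saving_policy c a d) t \<omega> = min (saving a d (\<omega> (t - 1)) + \<omega> t) c" for \<omega>
    using assms by (simp add: power_def saving_policy_def)
  then have "(\<integral>\<omega>. r (power (saving_policy c a d) t \<omega>) \<partial>arrivals D)
      = (\<integral>\<omega>. r (min (\<omega> t) c) + u \<omega> * h (\<omega> t) \<partial>arrivals D)"
    by (intro Bochner_Integration.integral_cong) (auto simp: u_def h_def saving_def)
  also have "\<dots> = greedy_reward + (\<integral>\<omega>. u \<omega> \<partial>arrivals D) * (\<integral>x. h x \<partial>D)"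
  proof -
    have "integrable (arrivals D) (\<lambda>\<omega>. u \<omega> * h (\<omega> t))"
    proof (rule integrable_bounded_arrivals[where B="r c"])
      fix \<omega> assume "\<omega> \<in> space (arrivals D)"
      then have "\<bar>h (\<omega> t)\<bar> \<le> r c"
        by (intro h_bound) (simp add: space_arrivals)
      then show "\<bar>u \<omega> * h (\<omega> t)\<bar> \<le> r c"
        using u_bound[of \<omega>] mult_left_le_one_le[of "\<bar>h (\<omega> t)\<bar>" "\<bar>u \<omega>\<bar>"]
        by (simp add: abs_mult)
    qed measurable
    moreover have "(\<integral>\<omega>. u \<omega> * h (\<omega> t) \<partial>arrivals D) = (\<integral>\<omega>. u \<omega> \<partial>arrivals D) * (\<integral>x. h x \<partial>D)"
      using u_bound h_bound assms(3)
      by (intro integral_mult_coordinate[where Bu=1 and Bh="r c"]) (auto simp: u_def)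
    ultimately show ?thesis
      using integrable_reward_min_coordinate by (simp add: integral_reward_min_coordinate)
  qed
  also have "(\<integral>\<omega>. u \<omega> \<partial>arrivals D) = 1 - rho D a"
    unfolding u_def by (rule integral_one_minus_indicator_less_coordinate)
  finally show ?thesis by (simp add: h_def)
qed

lemma throughput_saving_policy:
  assumes "0 \<le> d" "d \<le> a" "a \<le> c"
  shows "throughput D r (saving_policy c a d)
      = ereal (((\<integral>x. r (min x c - saving a d x) \<partial>D)
          + (greedy_reward + (1 - rho D a) * (\<integral>x. r (min (d + x) c) - r (min x c) \<partial>D))) / 2)"
  by (intro throughput_eqI averages_alternating_tendsto expected_reward_saving_policy_odd[OF assms]
      expected_reward_saving_policy_even[OF assms(1)])

lemma loss_of_saving:
  assumes "0 \<le> d" "d \<le> a" "a \<le> c"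
  shows "greedy_reward - (\<integral>x. r (min x c - saving a d x) \<partial>D) \<le> (1 - rho D a) * (r' (a - d) * d)"
proof -
  have int_saving: "integrable D (\<lambda>x. r (min x c - saving a d x))"
  proof (rule integrable_bounded_halfline[where B="r c"])
    show "(\<lambda>x. r (min x c - saving a d x)) \<in> borel_measurable D"
      using assms by (intro borel_measurable_reward_comp) (auto simp: saving_def space_halfline)
    show "\<bar>r (min x c - saving a d x)\<bar> \<le> r c" if "0 \<le> x" for x
      using assms that by (intro abs_reward_le) (auto simp: saving_def)
  qed
  have int_greedy: "integrable D (\<lambda>x. r (min x c))"
    using capacity_nonneg abs_reward_le by (intro integrable_bounded_halfline[where B="r c"]) auto
  have "greedy_reward - (\<integral>x. r (min x c - saving a d x) \<partial>D)
      = (\<integral>x. r (min x c) - r (min x c - saving a d x) \<partial>D)"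
    using int_saving int_greedy by (simp add: greedy_reward_def)
  also have "\<dots> \<le> (\<integral>x. r' (a - d) * d * (1 - indicator {y. y < a} x) \<partial>D)"
  proof (rule integral_mono)
    fix x assume "x \<in> space D"
    show "r (min x c) - r (min x c - saving a d x) \<le> r' (a - d) * d * (1 - indicator {y. y < a} x)"
    proof (cases "a \<le> x")
      case True
      have "r (min x c) - r (min x c - d) \<le> r' (min x c - d) * d"
        using slope_le_deriv[of "min x c - d" "min x c"] True assms by fastforce
      also have "\<dots> \<le> r' (a - d) * d"
        using True assms by (intro mult_right_mono deriv_antimono) auto
      finally show ?thesis using True by (simp add: saving_def)
    qed (simp add: saving_def)
  qed (use int_saving int_greedy integrable_indicator_less in auto)
  also have "\<dots> = (1 - rho D a) * (r' (a - d) * d)"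
    using integrable_indicator_less by (simp add: rho_eq_integral prob_space)
  finally show ?thesis .
qed

definition shifted_deriv_mean :: "real \<Rightarrow> real" where
  "shifted_deriv_mean d = (\<integral>y. r' (y + d) * indicator {y. y < c - d} y \<partial>D)"

lemma borel_measurable_deriv_shift_indicator:
  assumes "0 \<le> d"
  shows "(\<lambda>y. r' (y + d) * indicator {y. y < c - d} y) \<in> borel_measurable D"
proof -
  have [measurable]: "(\<lambda>y. r' (y + d)) \<in> borel_measurable D"
    using assms by (intro borel_measurable_deriv_comp) (auto simp: space_halfline)
  show ?thesis by measurable
qed

lemma abs_deriv_shift_indicator_le:
  "0 \<le> d \<Longrightarrow> 0 \<le> y \<Longrightarrow> \<bar>r' (y + d) * indicator {y. y < c - d} y\<bar> \<le> r' 0"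
  using abs_deriv_le[of "y + d"] deriv_nonneg[of 0] by (auto simp: indicator_def)

lemma gain_of_saving:
  assumes "0 \<le> d"
  shows "d * shifted_deriv_mean d \<le> (\<integral>x. r (min (d + x) c) - r (min x c) \<partial>D)"
proof -
  have "d * shifted_deriv_mean d = (\<integral>x. d * (r' (x + d) * indicator {y. y < c - d} x) \<partial>D)"
    by (simp add: shifted_deriv_mean_def)
  also have "\<dots> \<le> (\<integral>x. r (min (d + x) c) - r (min x c) \<partial>D)"
  proof (rule integral_mono)
    show "integrable D (\<lambda>x. d * (r' (x + d) * indicator {y. y < c - d} x))"
      using assms abs_deriv_shift_indicator_le borel_measurable_deriv_shift_indicator
      by (intro integrable_mult_right integrable_bounded_halfline[where B="r' 0"])
    show "integrable D (\<lambda>x. r (min (d + x) c) - r (min x c))"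
      using assms by (rule integrable_reward_increment)
    fix x assume "x \<in> space D"
    then have "0 \<le> x" by (simp add: space_halfline)
    show "d * (r' (x + d) * indicator {y. y < c - d} x) \<le> r (min (d + x) c) - r (min x c)"
    proof (cases "x < c - d")
      case True
      then show ?thesis
        using deriv_le_slope[of x "x + d"] \<open>0 \<le> x\<close> assms by (simp add: algebra_simps)
    next
      case False
      then show ?thesis
        using reward_increment_bounds(1)[OF assms \<open>0 \<le> x\<close>] by simp
    qed
  qed
  finally show ?thesis .
qed

lemma saving_policy_beats_greedy:
  assumes "0 < d" "d \<le> a" "a \<le> c" "rho D a < 1" "r' (a - d) < shifted_deriv_mean d"
  shows "ereal greedy_reward < throughput D r (saving_policy c a d)"
proof -
  have p: "0 < 1 - rho D a"
    using assms by simp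
  have "greedy_reward - (\<integral>x. r (min x c - saving a d x) \<partial>D) \<le> (1 - rho D a) * (r' (a - d) * d)"
    using assms by (intro loss_of_saving) auto
  also have "\<dots> < (1 - rho D a) * (d * shifted_deriv_mean d)"
    using assms p by (metis mult.commute mult_strict_left_mono mult_strict_right_mono)
  also have "\<dots> \<le> (1 - rho D a) * (\<integral>x. r (min (d + x) c) - r (min x c) \<partial>D)"
    using assms p by (intro mult_left_mono gain_of_saving) auto
  finally have "greedy_reward < ((\<integral>x. r (min x c - saving a d x) \<partial>D)
      + (greedy_reward + (1 - rho D a) * (\<integral>x. r (min (d + x) c) - r (min x c) \<partial>D))) / 2"
    by (simp add: field_simps)
  then show ?thesis
    using assms by (simp add: throughput_saving_policy)
qed

lemma tendsto_shifted_deriv_mean: "(shifted_deriv_mean \<longlongrightarrow> deriv_mean_below c) (at_right 0)"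
  unfolding shifted_deriv_mean_def[abs_def] deriv_mean_below_def
proof (rule tendsto_integral_bounded_within[where B="r' 0"])
  fix d :: real assume "d \<in> {0<..}"
  then show "(\<lambda>y. r' (y + d) * indicator {y. y < c - d} y) \<in> borel_measurable D"
    "\<And>y. y \<in> space D \<Longrightarrow> \<bar>r' (y + d) * indicator {y. y < c - d} y\<bar> \<le> r' 0"
    by (auto simp: space_halfline intro: borel_measurable_deriv_shift_indicator abs_deriv_shift_indicator_le)
next
  fix y assume "y \<in> space D"
  then have "0 \<le> y" by (simp add: space_halfline)
  show "((\<lambda>d. r' (y + d) * indicator {y. y < c - d} y) \<longlongrightarrow> r' y * indicator {y. y < c} y)
      (at_right 0)"
  proof (cases "y < c")
    case True
    have "((\<lambda>d. r' (y + d)) \<longlongrightarrow> r' (y + 0)) (at_right 0)"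
      using \<open>0 \<le> y\<close>
      by (intro continuous_on_tendsto_compose[OF deriv_continuous] tendsto_intros)
        (auto simp: eventually_at_filter)
    moreover have "\<forall>\<^sub>F d in at_right 0. r' (y + d) = r' (y + d) * indicator {y. y < c - d} y"
      using eventually_at_right_real[of 0 "c - y"] True by (auto elim!: eventually_mono)
    ultimately show ?thesis
      using True by (auto intro: Lim_transform_eventually)
  next
    case False
    have "\<forall>\<^sub>F d in at_right 0. r' (y + d) * indicator {y. y < c - d} y = r' y * indicator {y. y < c} y"
      using eventually_at_right_less[of "0::real"] by eventually_elim (use False in auto)
    then show ?thesis by (rule tendsto_eventually)
  qed
qed (simp add: borel_measurable_deriv_indicator)

lemma exists_saving_amount:
  assumes "0 < a" "r' a < deriv_mean_below c"
  shows "\<exists>d. 0 < d \<and> d \<le> a \<and> r' (a - d) < shifted_deriv_mean d"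
proof -
  define m where "m = (r' a + deriv_mean_below c) / 2"
  have "((\<lambda>d. r' (a - d)) \<longlongrightarrow> r' (a - 0)) (at_right 0)"
    by (intro isCont_tendsto_compose[OF isCont_deriv] tendsto_intros) (use assms in simp)
  then have "\<forall>\<^sub>F d in at_right 0. r' (a - d) < m"
    using assms by (intro order_tendstoD(2)) (auto simp: m_def)
  moreover have "\<forall>\<^sub>F d in at_right 0. m < shifted_deriv_mean d"
    using assms by (intro order_tendstoD(1)[OF tendsto_shifted_deriv_mean]) (simp add: m_def)
  moreover have "\<forall>\<^sub>F d in at_right 0. 0 < d \<and> d < a"
    using eventually_at_right_real[OF \<open>0 < a\<close>] by eventually_elim auto
  ultimately have "\<forall>\<^sub>F d in at_right 0. 0 < d \<and> d \<le> a \<and> r' (a - d) < shifted_deriv_mean d"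
    by eventually_elim auto
  then show ?thesis
    by (auto dest: eventually_happens)
qed

lemma exists_level_below:
  assumes hyp: "deriv_at_xhigh r' D < r' (xlow D)" and bad: "r' c < deriv_mean_below c"
  shows "\<exists>a. 0 < a \<and> a \<le> c \<and> rho D a < 1 \<and> r' a < deriv_mean_below c"
proof (cases "rho D c < 1")
  case True
  have "c \<noteq> 0"
    using bad deriv_mean_below_zero deriv_nonneg[of 0] by auto
  with True bad capacity_nonneg show ?thesis
    by (intro exI[of _ c]) auto
next
  case False
  then have rho_c: "rho D c = 1"
    using rho_le_1[of c] by simp
  then show ?thesis
  proof (cases rule: xhigh_cases)
    case infinite
    then show ?thesis using rho_c capacity_nonneg by force
  next
    case (finite h)
    have "h \<le> c"
      using finite(4)[of c] rho_c capacity_nonneg by force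
    have hyp_h: "r' h < r' (xlow D)"
      using hyp finite(1) by (simp add: deriv_at_xhigh_def)
    then have "0 < h"
      using deriv_antimono[of h "xlow D"] xlow_nonneg finite(2) by force
    have "r' h < deriv_mean_below c"
      by (rule deriv_xhigh_lt_deriv_mean_below[OF finite(1) hyp_h \<open>h \<le> c\<close> rho_c])
    moreover have "(r' \<longlongrightarrow> r' h) (at_left h)"
      using isCont_deriv[OF \<open>0 < h\<close>] by (auto simp: isCont_def intro: tendsto_within_subset)
    ultimately have "\<forall>\<^sub>F a in at_left h. r' a < deriv_mean_below c"
      by (intro order_tendstoD(2))
    moreover have "\<forall>\<^sub>F a in at_left h. 0 < a \<and> a < h"
      using eventually_at_left_real[OF \<open>0 < h\<close>] by eventually_elim auto
    ultimately obtain a where "0 < a" "a < h" "r' a < deriv_mean_below c"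
      by (auto dest: eventually_happens[OF eventually_conj])
    then show ?thesis
      using finite(4)[of a] \<open>h \<le> c\<close> by (intro exI[of _ a]) auto
  qed
qed

lemma exists_policy_beating_greedy:
  assumes "deriv_at_xhigh r' D < r' (xlow D)" "r' c < deriv_mean_below c"
  shows "\<exists>f. admissible D c f \<and> ereal greedy_reward < throughput D r f"
proof -
  obtain a where a: "0 < a" "a \<le> c" "rho D a < 1" "r' a < deriv_mean_below c"
    using exists_level_below[OF assms] by blast
  obtain d where d: "0 < d" "d \<le> a" "r' (a - d) < shifted_deriv_mean d"
    using exists_saving_amount[OF a(1,4)] by blast
  show ?thesis
    using admissible_saving_policy[of d a] saving_policy_beats_greedy[of d a] a d by auto
qed

end

context energy_system
begin

lemma greedy_optimal_iff_le_Sup_cstar_set: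
  assumes hyp: "deriv_at_xhigh r' D < r' (xlow D)"
  shows "greedy_optimal D r c \<longleftrightarrow> c \<le> Sup (cstar_set D r')"
proof
  assume "c \<le> Sup (cstar_set D r')"
  then have "deriv_mean_below c \<le> r' c"
    using cstar_set_has_greatest(1)[OF hyp] capacity_nonneg
      deriv_mean_below_mono[of c] deriv_antimono[of c]
    by (fastforce simp: cstar_set_eq)
  then show "greedy_optimal D r c"
    by (rule greedy_optimal_if_deriv_mean_below_le)
next
  assume "greedy_optimal D r c"
  show "c \<le> Sup (cstar_set D r')"
  proof (rule ccontr)
    assume "\<not> c \<le> Sup (cstar_set D r')"
    then have "r' c < deriv_mean_below c"
      using cstar_set_has_greatest(2)[OF hyp, of c] capacity_nonneg by (force simp: cstar_set_eq)
    with \<open>greedy_optimal D r c\<close> show False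
      using exists_policy_beating_greedy[OF hyp] not_greedy_optimal_if_better_policy by blast
  qed
qed

lemma greedy_optimal_iff_le_cstar:
  assumes "deriv_at_xhigh r' D < r' (xlow D)"
  shows "\<exists>cs. cs \<in> cstar_set D r' \<and> (\<forall>y\<in>cstar_set D r'. y \<le> cs) \<and> (greedy_optimal D r c \<longleftrightarrow> c \<le> cs)"
  using cstar_set_has_greatest[OF assms] greedy_optimal_iff_le_Sup_cstar_set[OF assms] by blast

end

lemma concave_reward_log: "concave_reward (\<lambda>x. ln (1 + x) / 2) (\<lambda>x. 1 / (2 * (1 + x)))"
proof
  have deriv: "((\<lambda>x. ln (1 + x) / 2) has_real_derivative 1 / (2 * (1 + x))) (at x)" if "0 \<le> x" for x :: real
    using that by (auto intro!: derivative_eq_intros simp: divide_simps)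
  then show "\<forall>x\<ge>0. ((\<lambda>x. ln (1 + x) / 2) has_real_derivative 1 / (2 * (1 + x))) (at x within {0..})"
    by (auto intro: has_field_derivative_at_within)
  show "concave_on {0..} (\<lambda>x. ln (1 + x) / 2)"
  proof (rule f''_le0_imp_concave[where f'="\<lambda>x. 1 / (2 * (1 + x))" and f''="\<lambda>x. - 1 / (2 * (1 + x)^2)"])
    fix x :: real assume "x \<in> {0..}"
    then show "((\<lambda>x. 1 / (2 * (1 + x))) has_real_derivative - 1 / (2 * (1 + x)^2)) (at x)"
      by (auto intro!: derivative_eq_intros simp: power2_eq_square divide_simps)
        (simp add: algebra_simps)
  qed (use deriv in auto)
  show "\<forall>x::real\<ge>0. 0 \<le> ln (1 + x) / 2" by simp
  show "mono_on {0..} (\<lambda>x::real. ln (1 + x) / 2)"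
    by (rule mono_onI) auto
  show "continuous_on {0..} (\<lambda>x::real. 1 / (2 * (1 + x)))"
    by (intro continuous_intros) auto
qed

lemma cstar_set_log:
  "cstar_set D (\<lambda>x. 1 / (2 * (1 + x)))
     = {x. 0 \<le> x \<and> (\<integral>y. 1 / (1 + y) * indicator {y. y < x} y \<partial>D) \<le> 1 / (1 + x)}"
proof -
  have half: "(\<integral>y. 1 / (2 * (1 + y)) * indicator {y. y < x} y \<partial>D)
      = (\<integral>y. 1 / (1 + y) * indicator {y. y < x} y \<partial>D) / 2" for x
  proof -
    have "(\<integral>y. 1 / (2 * (1 + y)) * indicator {y. y < x} y \<partial>D)
        = (\<integral>y. 1 / (1 + y) * indicator {y. y < x} y / 2 \<partial>D)"
      by (rule Bochner_Integration.integral_cong) auto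
    also have "\<dots> = (\<integral>y. 1 / (1 + y) * indicator {y. y < x} y \<partial>D) / 2"
      by (rule integral_divide_zero)
    finally show ?thesis .
  qed
  have "(\<integral>y. 1 / (2 * (1 + y)) * indicator {y. y < x} y \<partial>D) \<le> 1 / (2 * (1 + x))
      \<longleftrightarrow> (\<integral>y. 1 / (1 + y) * indicator {y. y < x} y \<partial>D) \<le> 1 / (1 + x)" for x
  proof -
    have eq: "1 / (2 * (1 + x)) = 1 / (1 + x) / 2" and half_le: "a / 2 \<le> b / 2 \<longleftrightarrow> a \<le> b"
      for a b :: real
      by simp_all
    show ?thesis
      by (simp only: half[of x] eq half_le)
  qed
  then show ?thesis
    by (simp only: cstar_set_def)
qed

theorem theorem1:
  fixes D :: "real measure" and c :: real
  assumes "prob_space D"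
    and "sets D = sets (restrict_space borel {0..})"
    and "0 \<le> c"
  shows "(\<forall>r r'.
            (\<forall>x\<ge>0. 0 \<le> r x) \<and> mono_on {0..} r \<and> concave_on {0..} r \<and>
            (\<forall>x\<ge>0. (r has_real_derivative r' x) (at x within {0..})) \<and>
            continuous_on {0..} r' \<and>
            deriv_at_xhigh r' D < r' (xlow D)
          \<longrightarrow> (\<exists>cs. cs \<in> cstar_set D r' \<and> (\<forall>y\<in>cstar_set D r'. y \<le> cs) \<and>
                   (greedy_optimal D r c \<longleftrightarrow> c \<le> cs)))
       \<and> (deriv_at_xhigh (\<lambda>x. 1 / (2 * (1 + x))) D < 1 / (2 * (1 + xlow D))
          \<longrightarrow> (\<exists>cs. cs \<in> {x. 0 \<le> x \<and> (\<integral>y. 1 / (1 + y) * indicator {y. y < x} y \<partial>D) \<le> 1 / (1 + x)}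
                  \<and> (\<forall>y\<in>{x. 0 \<le> x \<and> (\<integral>y. 1 / (1 + y) * indicator {y. y < x} y \<partial>D) \<le> 1 / (1 + x)}. y \<le> cs)
                  \<and> (greedy_optimal D (\<lambda>x. ln (1 + x) / 2) c \<longleftrightarrow> c \<le> cs)))"
proof -
  have D: "halfline_distribution D"
    using assms(1,2) by (intro halfline_distribution.intro halfline_distribution_axioms.intro)
  have main: "\<exists>cs. cs \<in> cstar_set D r' \<and> (\<forall>y\<in>cstar_set D r'. y \<le> cs)
      \<and> (greedy_optimal D r c \<longleftrightarrow> c \<le> cs)"
    if "concave_reward r r'" "deriv_at_xhigh r' D < r' (xlow D)" for r r'
  proof -
    interpret energy_system r r' D c
      using that(1) D assms(3) by (intro energy_system.intro energy_system_axioms.intro)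
    show ?thesis
      using that(2) by (rule greedy_optimal_iff_le_cstar)
  qed
  show ?thesis
    using main[OF concave_reward_log, unfolded cstar_set_log]
    by (auto simp: concave_reward_def intro!: main)
qed

end
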